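(* Let $A \in \mathbb{R}^{n\times d}$ and let $\lbrace w_l : l \geq 0\rbrace \subset \mathbb{R}^n$ be an arbitrary sequence. Let $\mathcal{R}_0 = \lbrace 0 \rbrace \subset \mathbb{R}^d$ and $\mathcal{R}_l = \mathrm{span}\lbrace A'w_0,\ldots,A'w_{l-1}\rbrace$ for $l \geq 1$. Let $S_0 = I_d$ and for $l \geq 0$ define $$S_{l+1} = \begin{cases} S_l - \dfrac{S_l A' w_l w_l' A S_l}{w_l' A S_l A' w_l} & \text{if } S_l A' w_l \neq 0,\\ S_l & \text{otherwise.}\end{cases}$$ Then for every $l \geq 0$, $S_l$ is an orthogonal projection matrix onto $\mathcal{R}_l^{\perp}$.
   Context: $A'$ denotes the transpose of $A$; $I_d$ is the $d\times d$ identity matrix. *)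

theory Defs
  imports "HOL-Analysis.Analysis"
begin

primrec Sseq :: "real^'d^'n \<Rightarrow> (nat \<Rightarrow> real^'n) \<Rightarrow> nat \<Rightarrow> real^'d^'d" where
  "Sseq A w 0 = mat 1"
| "Sseq A w (Suc l) =
     (let S = Sseq A w l; u = S *v (transpose A *v w l) in
      if u \<noteq> 0
      then S - (1 / (w l \<bullet> (A *v u))) *\<^sub>R
               ((S ** transpose A ** (\<chi> i j. w l $ i * w l $ j)) ** A ** S)
      else S)"

definition Rspace :: "real^'d^'n \<Rightarrow> (nat \<Rightarrow> real^'n) \<Rightarrow> nat \<Rightarrow> (real^'d) set" where
  "Rspace A w l = span ((\<lambda>i. transpose A *v w i) ` {..<l})"

definition orth_proj_matrix_onto :: "real^'d^'d \<Rightarrow> (real^'d) set \<Rightarrow> bool" where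
  "orth_proj_matrix_onto P V \<longleftrightarrow>
     transpose P = P \<and> P ** P = P \<and> range (\<lambda>x. P *v x) = V"

end

theory Submission
  imports Defs
begin

text \<open>Let \<open>P\<close> be the orthogonal projection onto a subspace \<open>U\<close> and \<open>u = P v\<close>. Since \<open>P\<close> is
  self-adjoint and fixes \<open>U\<close>, a vector of \<open>U\<close> is orthogonal to \<open>v\<close> iff it is orthogonal to \<open>u\<close>.
  Hence \<open>U \<inter> v\<^sup>\<bottom> = U\<close> when \<open>u = 0\<close>, and otherwise the projection onto \<open>U \<inter> v\<^sup>\<bottom> = U \<inter> u\<^sup>\<bottom>\<close>
  is the rank-one correction \<open>P - u u' / (u' u)\<close>. When \<open>S\<^sub>l\<close> is symmetric and idempotent, the
  update defining \<open>S\<^sub>l\<^sub>+\<^sub>1\<close> is exactly this correction with \<open>P = S\<^sub>l\<close> and \<open>v = A' w\<^sub>l\<close> (the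
  denominator \<open>w\<^sub>l' A S\<^sub>l A' w\<^sub>l\<close> equals \<open>u' u\<close>), while the orthogonal complement of \<open>R\<^sub>l\<^sub>+\<^sub>1\<close>
  is that of \<open>R\<^sub>l\<close> intersected with \<open>(A' w\<^sub>l)\<^sup>\<bottom>\<close>.\<close>

lemma inner_matrix_vector_mult_transpose:
  fixes A :: "real^'m^'n"
  shows "x \<bullet> (A *v y) = (transpose A *v x) \<bullet> y"
  by (simp add: dot_lmul_matrix)

lemma symmetric_matrix_inner:
  fixes S :: "real^'n^'n"
  assumes "transpose S = S"
  shows "(S *v x) \<bullet> y = x \<bullet> (S *v y)"
  by (metis assms inner_matrix_vector_mult_transpose)

lemma transpose_eq_if_self_adjoint:
  fixes S :: "real^'n^'n"
  assumes "\<And>x y. (S *v x) \<bullet> y = x \<bullet> (S *v y)"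
  shows "transpose S = S"
proof -
  have "(\<lambda>x. transpose S *v x) = (\<lambda>x. S *v x)"
    using adjoint_unique[of "\<lambda>x. S *v x" "\<lambda>x. S *v x"] assms by (simp add: adjoint_matrix)
  then show ?thesis
    by (metis matrix_eq)
qed

lemma outer_product_mult_vec:
  fixes a :: "real^'n" and b :: "real^'m"
  shows "(\<chi> i j. a $ i * b $ j) *v x = (b \<bullet> x) *\<^sub>R a"
  by (simp add: vec_eq_iff matrix_vector_mult_def inner_vec_def sum_distrib_left ac_simps)

lemma orth_proj_matrix_onto_iff:
  "orth_proj_matrix_onto P U \<longleftrightarrow>
     (\<forall>x y. (P *v x) \<bullet> y = x \<bullet> (P *v y)) \<and> (\<forall>x. P *v (P *v x) = P *v x) \<and>
     range (\<lambda>x. P *v x) = U"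
  unfolding orth_proj_matrix_onto_def
  by (metis symmetric_matrix_inner transpose_eq_if_self_adjoint matrix_eq matrix_vector_mul_assoc)

lemma orth_proj_matrix_onto_mat_1: "orth_proj_matrix_onto (mat 1) UNIV"
  by (simp add: orth_proj_matrix_onto_def)

lemma orth_proj_matrix_onto_fixes:
  assumes "orth_proj_matrix_onto P U" and "y \<in> U"
  shows "P *v y = y"
  using assms unfolding orth_proj_matrix_onto_iff by blast

lemma orth_proj_matrix_onto_inner_image:
  assumes "orth_proj_matrix_onto P U" and "y \<in> U"
  shows "(P *v v) \<bullet> y = v \<bullet> y"
  using assms orth_proj_matrix_onto_fixes unfolding orth_proj_matrix_onto_iff by metis

lemma orth_proj_matrix_onto_Int_orthogonal_comp_image:
  assumes "orth_proj_matrix_onto P U"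
  shows "U \<inter> orthogonal_comp {P *v v} = U \<inter> orthogonal_comp {v}"
  using orth_proj_matrix_onto_inner_image[OF assms]
  by (auto simp: orthogonal_comp_def orthogonal_def)

lemma orth_proj_matrix_onto_rank_one_update:
  assumes P: "orth_proj_matrix_onto P U" and "u \<in> U" and "u \<noteq> 0"
  shows "orth_proj_matrix_onto (P - (1 / (u \<bullet> u)) *\<^sub>R (\<chi> i j. u $ i * u $ j))
           (U \<inter> orthogonal_comp {u})"
    (is "orth_proj_matrix_onto ?T _")
proof -
  have T: "?T *v x = P *v x - ((u \<bullet> x) / (u \<bullet> u)) *\<^sub>R u" for x
    by (simp add: matrix_vector_mult_diff_rdistrib scaleR_matrix_vector_assoc[symmetric]
        outer_product_mult_vec)
  have self_adjoint: "\<And>x y. (P *v x) \<bullet> y = x \<bullet> (P *v y)"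
    and idem: "\<And>x. P *v (P *v x) = P *v x"
    and range_P: "range (\<lambda>x. P *v x) = U"
    using P unfolding orth_proj_matrix_onto_iff by blast+
  have Pu: "P *v u = u"
    using P \<open>u \<in> U\<close> by (rule orth_proj_matrix_onto_fixes)
  have uu: "u \<bullet> u \<noteq> 0"
    using \<open>u \<noteq> 0\<close> by simp
  have u_T: "u \<bullet> (?T *v x) = 0" for x
    using self_adjoint[of u x] uu by (simp add: T Pu inner_diff_right)
  have P_T: "P *v (?T *v x) = ?T *v x" for x
    by (simp add: T idem Pu matrix_vector_mult_diff_distrib matrix_vector_mult_scaleR)
  have "(?T *v x) \<bullet> y = x \<bullet> (?T *v y)" for x y
    using self_adjoint[of x y] by (simp add: T inner_diff_left inner_diff_right inner_commute)
  moreover have "?T *v (?T *v x) = ?T *v x" for x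
    using u_T[of x] P_T[of x] by (simp add: T)
  moreover have "range (\<lambda>x. ?T *v x) = U \<inter> orthogonal_comp {u}"
  proof (intro set_eqI iffI)
    fix y
    assume "y \<in> range (\<lambda>x. ?T *v x)"
    then obtain x where y: "y = ?T *v x"
      by blast
    then have "y \<in> U"
      using P_T[of x] range_P by (metis rangeI)
    with u_T[of x] show "y \<in> U \<inter> orthogonal_comp {u}"
      by (simp add: y orthogonal_comp_def orthogonal_def)
  next
    fix y
    assume "y \<in> U \<inter> orthogonal_comp {u}"
    then have "P *v y = y" and "u \<bullet> y = 0"
      using orth_proj_matrix_onto_fixes[OF P] by (auto simp: orthogonal_comp_def orthogonal_def)
    then have "?T *v y = y"
      by (simp add: T)
    then show "y \<in> range (\<lambda>x. ?T *v x)"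
      by (metis rangeI)
  qed
  ultimately show ?thesis
    unfolding orth_proj_matrix_onto_iff by blast
qed

lemma orthogonal_comp_span: "orthogonal_comp (span B) = orthogonal_comp B"
proof
  show "orthogonal_comp (span B) \<subseteq> orthogonal_comp B"
    by (rule orthogonal_comp_anti_mono[OF span_superset])
  show "orthogonal_comp B \<subseteq> orthogonal_comp (span B)"
    by (auto simp: orthogonal_comp_def) (metis orthogonal_commute orthogonal_to_span)
qed

lemma orthogonal_comp_insert:
  "orthogonal_comp (insert v B) = orthogonal_comp B \<inter> orthogonal_comp {v}"
  by (auto simp: orthogonal_comp_def)

lemma orthogonal_comp_Rspace_Suc:
  "orthogonal_comp (Rspace A w (Suc l)) =
     orthogonal_comp (Rspace A w l) \<inter> orthogonal_comp {transpose A *v w l}"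
  unfolding Rspace_def lessThan_Suc image_insert orthogonal_comp_span
  by (rule orthogonal_comp_insert)

lemma symmetric_sandwich_outer_product:
  fixes A :: "real^'d^'n" and S :: "real^'d^'d" and w :: "real^'n"
  assumes sym: "transpose S = S"
  defines "u \<equiv> S *v (transpose A *v w)"
  shows "(S ** transpose A ** (\<chi> i j. w $ i * w $ j)) ** A ** S = (\<chi> i j. u $ i * u $ j)"
proof -
  have "((S ** transpose A ** (\<chi> i j. w $ i * w $ j)) ** A ** S) *v x
          = ((transpose A *v w) \<bullet> (S *v x)) *\<^sub>R u" for x
    by (simp only: u_def matrix_vector_mul_assoc[symmetric] outer_product_mult_vec
        inner_matrix_vector_mult_transpose matrix_vector_mult_scaleR)
  also have "((transpose A *v w) \<bullet> (S *v x)) *\<^sub>R u = (\<chi> i j. u $ i * u $ j) *v x" for x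
    by (simp add: outer_product_mult_vec u_def symmetric_matrix_inner[OF sym])
  finally show ?thesis
    by (simp add: matrix_eq)
qed

lemma Sseq_Suc_eq:
  assumes "orth_proj_matrix_onto (Sseq A w l) U"
  shows "Sseq A w (Suc l) =
           (let S = Sseq A w l; u = S *v (transpose A *v w l) in
            if u \<noteq> 0 then S - (1 / (u \<bullet> u)) *\<^sub>R (\<chi> i j. u $ i * u $ j) else S)"
proof -
  define S where "S = Sseq A w l"
  define u where "u = S *v (transpose A *v w l)"
  have sym: "transpose S = S"
    using assms by (simp add: S_def orth_proj_matrix_onto_def)
  have idem: "S *v (S *v x) = S *v x" for x
    using assms unfolding S_def orth_proj_matrix_onto_iff by blast
  have "S *v u = u"
    by (simp only: u_def idem)
  then have "w l \<bullet> (A *v u) = (transpose A *v w l) \<bullet> (S *v u)"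
    by (simp only: inner_matrix_vector_mult_transpose)
  also have "\<dots> = u \<bullet> u"
    by (metis symmetric_matrix_inner[OF sym] u_def)
  finally show ?thesis
    by (simp only: Sseq.simps Let_def S_def[symmetric] u_def[symmetric]
        symmetric_sandwich_outer_product[OF sym, of A "w l", folded u_def])
qed

theorem mainTheorem2:
  fixes A :: "real^'d^'n" and w :: "nat \<Rightarrow> real^'n" and l :: nat
  shows "orth_proj_matrix_onto (Sseq A w l) (orthogonal_comp (Rspace A w l))"
proof (induction l)
  case 0
  then show ?case
    by (simp add: Rspace_def orth_proj_matrix_onto_mat_1)
next
  case (Suc l)
  define S where "S = Sseq A w l"
  define u where "u = S *v (transpose A *v w l)"
  have IH: "orth_proj_matrix_onto S (orthogonal_comp (Rspace A w l))"
    using Suc.IH by (simp add: S_def)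
  have R: "orthogonal_comp (Rspace A w (Suc l)) = orthogonal_comp (Rspace A w l) \<inter> orthogonal_comp {u}"
    by (simp add: orthogonal_comp_Rspace_Suc u_def orth_proj_matrix_onto_Int_orthogonal_comp_image[OF IH])
  have step: "Sseq A w (Suc l) =
      (if u \<noteq> 0 then S - (1 / (u \<bullet> u)) *\<^sub>R (\<chi> i j. u $ i * u $ j) else S)"
    using Sseq_Suc_eq[OF Suc.IH] unfolding Let_def S_def[symmetric] u_def[symmetric] .
  show ?case
  proof (cases "u = 0")
    case True
    then show ?thesis
      unfolding step R using IH by simp
  next
    case False
    have "u \<in> orthogonal_comp (Rspace A w l)"
      using IH by (auto simp: u_def orth_proj_matrix_onto_def)
    with False show ?thesis
      unfolding step R by (simp add: orth_proj_matrix_onto_rank_one_update[OF IH])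
  qed
qed

end
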